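(* The axioms (S1)–(S5) are independent: for each $i\in\{1,2,3,4,5\}$ there is a structure $\langle M,\mathsf{S}\rangle$, with $M$ a non-empty set and $\mathsf{S}\subseteq M\times\mathcal{P}(M)$, that satisfies every axiom (S$j$) with $j\neq i$ but does not satisfy (S$i$).
   Context: For a set $M$ and a relation $\mathsf{S}\subseteq M\times\mathcal{P}(M)$ define: $x\sqsubseteq_{\mathsf{S}} y$ iff there is $X\subseteq M$ with $y\,\mathsf{S}\,X$ and $x\in X$; $\mathrm{I}(x)=\{y\in M\mid y\sqsubseteq_{\mathsf{S}} x\}$ and for $A\subseteq M$, $\mathrm{I}(A)=\bigcup_{a\in A}\mathrm{I}(a)$; $x$ s-overlaps $y$ iff there are $X,Y\subseteq M$ with $x\,\mathsf{S}\,X$, $y\,\mathsf{S}\,Y$, $X\cap Y\neq\emptyset$; a set $A\subseteq M$ is pre-dense in $B\subseteq M$ iff for every $b\in B$ there is $a\in A$ such that $a$ s-overlaps $b$. Axioms (all variables range over $M$, capital letters over subsets of $M$): (S1) for every non-empty $X\subseteq M$ there is $x\in M$ with $x\,\mathsf{S}\,X$; (S2) $x\,\mathsf{S}\,X\wedge y\,\mathsf{S}\,X\to x=y$; (S3) $x\,\mathsf{S}\,X\wedge y\,\mathsf{S}\,Y\wedge x\in Y\to y\,\mathsf{S}\,(X\cup Y)$; (S4) if $x\,\mathsf{S}\,X$, $x\,\mathsf{S}\,Y$ and $y\in Y$, then there are $z\in X$ and $Z,U\subseteq M$ with $z\,\mathsf{S}\,Z$, $y\,\mathsf{S}\,U$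 and $Z\cap U\neq\emptyset$; (S5) for all $x\in M$ and $X\subseteq M$: if $X$ is pre-dense in $\mathrm{I}(x)$ then $x\,\mathsf{S}\,(\mathrm{I}(x)\cap\mathrm{I}(X))$. *)

theory Defs
  imports Main
begin

definition is_structure :: "'a set \<Rightarrow> ('a \<Rightarrow> 'a set \<Rightarrow> bool) \<Rightarrow> bool" where
  "is_structure M S \<longleftrightarrow> M \<noteq> {} \<and> (\<forall>x X. S x X \<longrightarrow> x \<in> M \<and> X \<subseteq> M)"

definition ingr :: "'a set \<Rightarrow> ('a \<Rightarrow> 'a set \<Rightarrow> bool) \<Rightarrow> 'a \<Rightarrow> 'a \<Rightarrow> bool" where
  "ingr M S x y \<longleftrightarrow> (\<exists>X. X \<subseteq> M \<and> S y X \<and> x \<in> X)"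

definition Iel :: "'a set \<Rightarrow> ('a \<Rightarrow> 'a set \<Rightarrow> bool) \<Rightarrow> 'a \<Rightarrow> 'a set" where
  "Iel M S x = {y \<in> M. ingr M S y x}"

definition Iset :: "'a set \<Rightarrow> ('a \<Rightarrow> 'a set \<Rightarrow> bool) \<Rightarrow> 'a set \<Rightarrow> 'a set" where
  "Iset M S A = (\<Union>a\<in>A. Iel M S a)"

definition s_overlaps :: "'a set \<Rightarrow> ('a \<Rightarrow> 'a set \<Rightarrow> bool) \<Rightarrow> 'a \<Rightarrow> 'a \<Rightarrow> bool" where
  "s_overlaps M S x y \<longleftrightarrow> (\<exists>X Y. X \<subseteq> M \<and> Y \<subseteq> M \<and> S x X \<and> S y Y \<and> X \<inter> Y \<noteq> {})"

definition pre_dense :: "'a set \<Rightarrow> ('a \<Rightarrow> 'a set \<Rightarrow> bool) \<Rightarrow> 'a set \<Rightarrow> 'a set \<Rightarrow> bool" where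
  "pre_dense M S A B \<longleftrightarrow> (\<forall>b\<in>B. \<exists>a\<in>A. s_overlaps M S a b)"

definition S1 :: "'a set \<Rightarrow> ('a \<Rightarrow> 'a set \<Rightarrow> bool) \<Rightarrow> bool" where
  "S1 M S \<longleftrightarrow> (\<forall>X. X \<subseteq> M \<and> X \<noteq> {} \<longrightarrow> (\<exists>x\<in>M. S x X))"

definition S2 :: "'a set \<Rightarrow> ('a \<Rightarrow> 'a set \<Rightarrow> bool) \<Rightarrow> bool" where
  "S2 M S \<longleftrightarrow> (\<forall>x\<in>M. \<forall>y\<in>M. \<forall>X. X \<subseteq> M \<longrightarrow> S x X \<and> S y X \<longrightarrow> x = y)"

definition S3 :: "'a set \<Rightarrow> ('a \<Rightarrow> 'a set \<Rightarrow> bool) \<Rightarrow> bool" where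
  "S3 M S \<longleftrightarrow> (\<forall>x\<in>M. \<forall>y\<in>M. \<forall>X Y. X \<subseteq> M \<longrightarrow> Y \<subseteq> M \<longrightarrow>
      S x X \<and> S y Y \<and> x \<in> Y \<longrightarrow> S y (X \<union> Y))"

definition S4 :: "'a set \<Rightarrow> ('a \<Rightarrow> 'a set \<Rightarrow> bool) \<Rightarrow> bool" where
  "S4 M S \<longleftrightarrow> (\<forall>x\<in>M. \<forall>y\<in>M. \<forall>X Y. X \<subseteq> M \<longrightarrow> Y \<subseteq> M \<longrightarrow>
      S x X \<and> S x Y \<and> y \<in> Y \<longrightarrow>
      (\<exists>z\<in>X. \<exists>Z U. Z \<subseteq> M \<and> U \<subseteq> M \<and> S z Z \<and> S y U \<and> Z \<inter> U \<noteq> {}))"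

definition S5 :: "'a set \<Rightarrow> ('a \<Rightarrow> 'a set \<Rightarrow> bool) \<Rightarrow> bool" where
  "S5 M S \<longleftrightarrow> (\<forall>x\<in>M. \<forall>X. X \<subseteq> M \<longrightarrow>
      pre_dense M S X (Iel M S x) \<longrightarrow> S x (Iel M S x \<inter> Iset M S X))"

definition Sax :: "nat \<Rightarrow> 'a set \<Rightarrow> ('a \<Rightarrow> 'a set \<Rightarrow> bool) \<Rightarrow> bool" where
  "Sax i M S = (if i = 1 then S1 M S else if i = 2 then S2 M S else if i = 3 then S3 M S
               else if i = 4 then S4 M S else S5 M S)"

end

theory Submission
  imports Defs
begin

text \<open>Each axiom is refuted by a structure on at most three points that satisfies the other
  four. If \<open>S\<close> is membership in a relation \<open>R \<subseteq> M \<times> Pow M\<close>, all notions occurring in the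
  axioms can be read off \<open>R\<close> alone: \<open>I(x)\<close> is the union of the sets of which \<open>x\<close> is the
  sum, and \<open>x\<close> s-overlaps \<open>y\<close> iff some set summed by \<open>x\<close> meets some set summed by \<open>y\<close>.
  For finite \<open>R\<close> every axiom thereby becomes a finite check, which the simplifier decides.\<close>

definition independence_witness :: "nat \<Rightarrow> 'a set \<Rightarrow> ('a \<Rightarrow> 'a set \<Rightarrow> bool) \<Rightarrow> bool" where
  "independence_witness i M S \<longleftrightarrow>
     is_structure M S \<and> (\<forall>j\<in>{1..5}. j \<noteq> i \<longrightarrow> Sax j M S) \<and> \<not> Sax i M S"

definition rel_overlaps :: "('a \<times> 'a set) set \<Rightarrow> 'a \<Rightarrow> 'a \<Rightarrow> bool" where
  "rel_overlaps R x y \<longleftrightarrow> (\<exists>X\<in>R `` {x}. \<exists>Y\<in>R `` {y}. X \<inter> Y \<noteq> {})"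

definition Sax_rel :: "nat \<Rightarrow> 'a set \<Rightarrow> ('a \<times> 'a set) set \<Rightarrow> bool" where
  "Sax_rel i M R =
    (if i = 1 then Pow M - {{}} \<subseteq> Range R
     else if i = 2 then inj_on snd R
     else if i = 3 then (\<forall>(x, X)\<in>R. \<forall>(y, Y)\<in>R. x \<in> Y \<longrightarrow> (y, X \<union> Y) \<in> R)
     else if i = 4 then (\<forall>(x, X)\<in>R. \<forall>Y\<in>R `` {x}. \<forall>y\<in>Y. \<exists>z\<in>X. rel_overlaps R z y)
     else (\<forall>x\<in>M. \<forall>X\<in>Pow M. (\<forall>b\<in>\<Union>(R `` {x}). \<exists>a\<in>X. rel_overlaps R a b) \<longrightarrow>
             (x, \<Union>(R `` {x}) \<inter> \<Union>(R `` X)) \<in> R))"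

lemma Image_insert_pair:
  "insert (a, b) R `` A = (if a \<in> A then insert b (R `` A) else R `` A)"
  by auto

text \<open>Used as a rewrite rule, this lets \<open>simp\<close> decide equality of set literals.\<close>

lemma insert_eq_iff_subsets: "insert a A = B \<longleftrightarrow> a \<in> B \<and> A \<subseteq> B \<and> B \<subseteq> insert a A"
  by blast

lemma is_structure_in_rel: "is_structure M (in_rel R) \<longleftrightarrow> M \<noteq> {} \<and> R \<subseteq> M \<times> Pow M"
  unfolding is_structure_def in_rel_def by auto

context
  fixes M :: "'a set" and R :: "('a \<times> 'a set) set"
  assumes R_carrier: "R \<subseteq> M \<times> Pow M"
begin

lemma in_rel_carrier: "(x, X) \<in> R \<Longrightarrow> x \<in> M \<and> X \<subseteq> M"
  using R_carrier by blast

lemma Iel_in_rel: "Iel M (in_rel R) x = \<Union>(R `` {x})"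
proof (intro equalityI subsetI)
  fix y assume "y \<in> \<Union>(R `` {x})"
  then obtain X where "(x, X) \<in> R" "y \<in> X"
    by blast
  with in_rel_carrier show "y \<in> Iel M (in_rel R) x"
    unfolding Iel_def ingr_def in_rel_def by blast
qed (unfold Iel_def ingr_def in_rel_def, blast)

lemma Iset_in_rel: "Iset M (in_rel R) A = \<Union>(R `` A)"
  unfolding Iset_def Iel_in_rel by blast

lemma s_overlaps_in_rel: "s_overlaps M (in_rel R) x y \<longleftrightarrow> rel_overlaps R x y"
proof
  assume "rel_overlaps R x y"
  then obtain X Y where "(x, X) \<in> R" "(y, Y) \<in> R" "X \<inter> Y \<noteq> {}"
    unfolding rel_overlaps_def by blast
  with in_rel_carrier show "s_overlaps M (in_rel R) x y"
    unfolding s_overlaps_def in_rel_def by metis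
qed (unfold s_overlaps_def rel_overlaps_def in_rel_def, blast)

lemma S1_in_rel: "S1 M (in_rel R) \<longleftrightarrow> Pow M - {{}} \<subseteq> Range R"
proof
  assume cover: "Pow M - {{}} \<subseteq> Range R"
  show "S1 M (in_rel R)"
    unfolding S1_def
  proof (intro allI impI)
    fix X assume "X \<subseteq> M \<and> X \<noteq> {}"
    with cover obtain x where "(x, X) \<in> R"
      by blast
    with in_rel_carrier show "\<exists>x\<in>M. in_rel R x X"
      by (auto simp: in_rel_def)
  qed
qed (unfold S1_def in_rel_def, blast)

lemma S2_in_rel: "S2 M (in_rel R) \<longleftrightarrow> inj_on snd R"
proof
  assume S2: "S2 M (in_rel R)"
  show "inj_on snd R"
  proof (rule inj_onI)
    fix p q assume "p \<in> R" "q \<in> R" "snd p = snd q"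
    with S2 have "fst p = fst q"
      unfolding S2_def in_rel_def by (metis in_rel_carrier prod.collapse)
    with \<open>snd p = snd q\<close> show "p = q"
      by (simp add: prod_eq_iff)
  qed
qed (unfold S2_def inj_on_def in_rel_def, fastforce)

lemma S3_in_rel: "S3 M (in_rel R) \<longleftrightarrow> (\<forall>(x, X)\<in>R. \<forall>(y, Y)\<in>R. x \<in> Y \<longrightarrow> (y, X \<union> Y) \<in> R)"
proof
  assume S3: "S3 M (in_rel R)"
  show "\<forall>(x, X)\<in>R. \<forall>(y, Y)\<in>R. x \<in> Y \<longrightarrow> (y, X \<union> Y) \<in> R"
  proof (clarify)
    fix x X y Y assume "(x, X) \<in> R" "(y, Y) \<in> R" "x \<in> Y"
    with S3 show "(y, X \<union> Y) \<in> R"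
      unfolding S3_def in_rel_def by (meson in_rel_carrier)
  qed
qed (unfold S3_def in_rel_def, blast)

lemma S4_in_rel:
  "S4 M (in_rel R) \<longleftrightarrow> (\<forall>(x, X)\<in>R. \<forall>Y\<in>R `` {x}. \<forall>y\<in>Y. \<exists>z\<in>X. rel_overlaps R z y)"
proof
  assume S4: "S4 M (in_rel R)"
  show "\<forall>(x, X)\<in>R. \<forall>Y\<in>R `` {x}. \<forall>y\<in>Y. \<exists>z\<in>X. rel_overlaps R z y"
  proof (clarify)
    fix x X Y y assume xX: "(x, X) \<in> R" and xY: "(x, Y) \<in> R" and "y \<in> Y"
    with in_rel_carrier[OF xX] in_rel_carrier[OF xY] have "\<exists>z\<in>X. s_overlaps M (in_rel R) z y"
      using S4[unfolded S4_def, rule_format, of x y X Y]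
      unfolding s_overlaps_def in_rel_def by blast
    then show "\<exists>z\<in>X. rel_overlaps R z y"
      by (simp add: s_overlaps_in_rel)
  qed
next
  assume overlaps: "\<forall>(x, X)\<in>R. \<forall>Y\<in>R `` {x}. \<forall>y\<in>Y. \<exists>z\<in>X. rel_overlaps R z y"
  show "S4 M (in_rel R)"
    unfolding S4_def
  proof (intro ballI allI impI)
    fix x y X Y assume "in_rel R x X \<and> in_rel R x Y \<and> y \<in> Y"
    with overlaps have "\<exists>z\<in>X. s_overlaps M (in_rel R) z y"
      by (auto simp: in_rel_def s_overlaps_in_rel)
    then show "\<exists>z\<in>X. \<exists>Z U. Z \<subseteq> M \<and> U \<subseteq> M \<and> in_rel R z Z \<and> in_rel R y U \<and> Z \<inter> U \<noteq> {}"
      unfolding s_overlaps_def .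
  qed
qed

lemma S5_in_rel:
  "S5 M (in_rel R) \<longleftrightarrow> (\<forall>x\<in>M. \<forall>X\<in>Pow M. (\<forall>b\<in>\<Union>(R `` {x}). \<exists>a\<in>X. rel_overlaps R a b) \<longrightarrow>
      (x, \<Union>(R `` {x}) \<inter> \<Union>(R `` X)) \<in> R)"
  unfolding S5_def pre_dense_def Iel_in_rel Iset_in_rel s_overlaps_in_rel in_rel_def by blast

lemma Sax_in_rel: "Sax i M (in_rel R) \<longleftrightarrow> Sax_rel i M R"
  unfolding Sax_def Sax_rel_def S1_in_rel S2_in_rel S3_in_rel S4_in_rel S5_in_rel ..

end

lemma independence_witness_in_rel:
  "independence_witness i M (in_rel R) \<longleftrightarrow>
     M \<noteq> {} \<and> R \<subseteq> M \<times> Pow M \<and> \<not> Sax_rel i M R \<and> (\<forall>j\<in>{1, 2, 3, 4, 5} - {i}. Sax_rel j M R)"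
proof (cases "R \<subseteq> M \<times> Pow M")
  case True
  have "{1..5::nat} = {1, 2, 3, 4, 5}"
    by auto
  then show ?thesis
    unfolding independence_witness_def is_structure_in_rel Sax_in_rel[OF True] by blast
qed (simp add: independence_witness_def is_structure_in_rel)

lemmas literal_relation_simps = independence_witness_in_rel Sax_rel_def rel_overlaps_def Pow_insert
  Image_insert_pair insert_eq_iff_subsets insert_Diff_if

text \<open>No element is the sum of \<open>{0}\<close>; (S5) holds because \<open>I(0) = {}\<close>.\<close>

lemma independence_witness_S1: "independence_witness 1 {0} (in_rel {(0::nat, {})})"
  by (simp add: literal_relation_simps)

text \<open>Both \<open>0\<close> and \<open>1\<close> are the sum of \<open>{1}\<close>.\<close>

lemma independence_witness_S2:
  "independence_witness 2 {0, 1} (in_rel {(0::nat, {0}), (0, {0, 1}), (0, {1}), (1, {1})})"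
  by (simp add: literal_relation_simps)

text \<open>\<open>0\<close> is the sum of \<open>{1, 2}\<close> and a member of \<open>{0, 2}\<close>, the set summed by \<open>2\<close>,
  but \<open>2\<close> is not the sum of \<open>{0, 1, 2}\<close>.\<close>

lemma independence_witness_S3:
  "independence_witness 3 {0, 1, 2}
     (in_rel {(0::nat, {0}), (0, {0, 1}), (0, {1, 2}), (0, {0, 1, 2}), (1, {1}), (2, {2}), (2, {0, 2})})"
  by (simp add: literal_relation_simps)

text \<open>\<open>0\<close> is the sum of \<open>{}\<close> and of \<open>{0}\<close>, and no element of \<open>{}\<close> overlaps \<open>0\<close>.\<close>

lemma independence_witness_S4: "independence_witness 4 {0} (in_rel {(0::nat, {}), (0, {0})})"
  by (simp add: literal_relation_simps)

text \<open>\<open>{1}\<close> is pre-dense in \<open>I(0) = {0, 1}\<close>, but \<open>0\<close> is not the sum of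
  \<open>I(0) \<inter> I(1) = {1}\<close>.\<close>

lemma independence_witness_S5:
  "independence_witness 5 {0, 1} (in_rel {(0::nat, {0}), (0, {0, 1}), (1, {1})})"
  by (simp add: literal_relation_simps)

theorem theorem5p1:
  shows "\<forall>i\<in>{1..5::nat}. \<exists>(M :: nat set) S. is_structure M S \<and>
           (\<forall>j\<in>{1..5::nat}. j \<noteq> i \<longrightarrow> Sax j M S) \<and> \<not> Sax i M S"
proof
  fix i :: nat
  assume "i \<in> {1..5}"
  then have "i = 1 \<or> i = 2 \<or> i = 3 \<or> i = 4 \<or> i = 5"
    by auto
  then have "\<exists>(M :: nat set) S. independence_witness i M S"
    using independence_witness_S1 independence_witness_S2 independence_witness_S3
      independence_witness_S4 independence_witness_S5 by blast
  then show "\<exists>(M :: nat set) S. is_structure M S \<and>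
      (\<forall>j\<in>{1..5::nat}. j \<noteq> i \<longrightarrow> Sax j M S) \<and> \<not> Sax i M S"
    unfolding independence_witness_def .
qed

end
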